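(* Let $X$ be a random variable with a log-concave density such that $\Pr[X\ge0]>0$ and $\Pr[X\le0]>0$. Then $$\max\big\{\mathbb E[|X|\mid X\le0],\ \mathbb E[|X|\mid X\ge0]\big\}\le\frac{1}{\ln2}\mathbb E[|X|].$$
   Context: A nonnegative function $f$ on $\mathbb R$ is log-concave if $f(\lambda x+(1-\lambda)y)\ge f(x)^\lambda f(y)^{1-\lambda}$ for all $0\le\lambda\le1$ and $x,y\in\mathbb R$. *)

theory Defs
  imports "HOL-Probability.Probability"
begin

definition log_concave :: "(real \<Rightarrow> real) \<Rightarrow> bool" where
  "log_concave f \<longleftrightarrow> (\<forall>x. f x \<ge> 0) \<and>
     (\<forall>t x y. 0 \<le> t \<and> t \<le> 1 \<longrightarrow>
        f (t * x + (1 - t) * y) \<ge> f x powr t * f y powr (1 - t))"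

end

theory Submission
  imports Defs "HOL-Real_Asymp.Real_Asymp"
begin

text \<open>Write \<open>f\<close> for the density, \<open>p = P(X \<ge> 0)\<close>, \<open>A = E[X; X \<ge> 0]\<close> and \<open>N = E[-X; X \<le> 0]\<close>.
Log-concavity gives \<open>f 0 * f (t + u) \<le> f t * f u\<close> for \<open>t, u \<ge> 0\<close>; integrating over the quadrant
yields \<open>f 0 * A \<le> p\<^sup>2\<close>. On the negative half-line, log-concavity caps \<open>f\<close> by
\<open>f 0 * exp (- f 0 * x / p)\<close>, since a steeper rise towards \<open>0\<close> would force the right tail to carry
mass less than \<open>p\<close>. Mass \<open>1 - p\<close> lying below this cap has first moment at least
\<open>p * (p - 1 - ln p) / f 0\<close>. Eliminating \<open>f 0\<close> and using \<open>ln 2 \<le> 2 * p - 1 - ln p\<close> gives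
\<open>ln 2 * A / p \<le> A + N = E|X|\<close>; the bound for the negative half follows by applying this to \<open>-X\<close>.\<close>

lemma log_concave_nonneg: "log_concave f \<Longrightarrow> 0 \<le> f x"
  unfolding log_concave_def by blast

lemma log_concaveD:
  "log_concave f \<Longrightarrow> 0 \<le> t \<Longrightarrow> t \<le> 1 \<Longrightarrow> f x powr t * f y powr (1 - t) \<le> f (t * x + (1 - t) * y)"
  unfolding log_concave_def by blast

lemma log_concave_reflect:
  assumes "log_concave f"
  shows "log_concave (\<lambda>x. f (- x))"
  unfolding log_concave_def
proof (intro conjI allI impI)
  fix x :: real
  show "0 \<le> f (- x)" using log_concave_nonneg[OF assms] .
next
  fix t x y :: real
  assume "0 \<le> t \<and> t \<le> 1"
  then show "f (- x) powr t * f (- y) powr (1 - t) \<le> f (- (t * x + (1 - t) * y))"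
    using log_concaveD[OF assms, of t "- x" "- y"] by (simp add: algebra_simps)
qed

lemma log_concave_pos_between:
  assumes lc: "log_concave f" and "x \<le> z" "z \<le> y" "0 < f x" "0 < f y"
  shows "0 < f z"
proof (cases "x = y")
  case True
  then show ?thesis using assms by simp
next
  case False
  then have "0 < y - x" using assms by simp
  define t where "t = (y - z) / (y - x)"
  have t: "0 \<le> t" "t \<le> 1"
    using assms \<open>0 < y - x\<close> by (auto simp: t_def field_simps)
  have "t * (y - x) = y - z" using \<open>0 < y - x\<close> by (simp add: t_def)
  then have z: "t * x + (1 - t) * y = z" by algebra
  have "0 < f x powr t * f y powr (1 - t)" using assms by simp
  also have "\<dots> \<le> f z" using log_concaveD[OF lc t, of x y] z by simp
  finally show ?thesis .
qed

lemma log_concave_mult_add_le: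
  assumes lc: "log_concave f" and t: "0 \<le> t" and u: "0 \<le> u"
  shows "f 0 * f (t + u) \<le> f t * f u"
proof (cases "t + u = 0")
  case True
  then have "t = 0" "u = 0" using t u by auto
  then show ?thesis by simp
next
  case False
  define a where "a = u / (t + u)"
  have a: "0 \<le> a" "a \<le> 1" and "0 \<le> 1 - a" "1 - a \<le> 1"
    using t u False by (auto simp: a_def field_simps)
  have "a * 0 + (1 - a) * (t + u) = t" "(1 - a) * 0 + (1 - (1 - a)) * (t + u) = u"
    using False by (simp_all add: a_def field_simps)
  then have ft: "f 0 powr a * f (t + u) powr (1 - a) \<le> f t"
    and fu: "f 0 powr (1 - a) * f (t + u) powr a \<le> f u"
    using log_concaveD[OF lc a, of 0 "t + u"]
      log_concaveD[OF lc \<open>0 \<le> 1 - a\<close> \<open>1 - a \<le> 1\<close>, of 0 "t + u"] by simp_all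
  have "f 0 * f (t + u) = (f 0 powr a * f (t + u) powr (1 - a)) * (f 0 powr (1 - a) * f (t + u) powr a)"
    using log_concave_nonneg[OF lc] by (simp add: powr_add[symmetric] mult_ac)
  also have "\<dots> \<le> f t * f u"
    using ft fu log_concave_nonneg[OF lc] by (intro mult_mono) auto
  finally show ?thesis .
qed

(* The chord slope of ln f over [x, 0] bounds the decay rate of f on [0, \<infinity>). *)
lemma log_concave_exp_decay:
  assumes lc: "log_concave f" and f0: "0 < f 0" and x: "x < 0" and fx: "0 < f x" and y: "0 \<le> y"
  shows "f y \<le> f 0 * exp (- (ln (f x / f 0) / (- x)) * y)"
proof (cases "f y = 0")
  case True
  then show ?thesis using f0 by simp
next
  case False
  then have fy: "0 < f y" using log_concave_nonneg[OF lc, of y] by simp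
  define t where "t = y / (y - x)"
  have t: "0 \<le> t" "t \<le> 1" and zero: "t * x + (1 - t) * y = 0"
    using x y by (auto simp: t_def field_simps)
  have "f x powr t * f y powr (1 - t) \<le> f 0" using log_concaveD[OF lc t, of x y] zero by simp
  then have "t * ln (f x) + (1 - t) * ln (f y) \<le> ln (f 0)"
    using fx fy f0 by (subst (asm) ln_le_cancel_iff[symmetric]) (auto simp: ln_mult)
  then have "(y - x) * (t * ln (f x) + (1 - t) * ln (f y)) \<le> (y - x) * ln (f 0)"
    using x y by (intro mult_left_mono) auto
  moreover have "(y - x) * t = y" "(y - x) * (1 - t) = - x"
    using x y by (simp_all add: t_def field_simps)
  ultimately have "y * ln (f x) - x * ln (f y) \<le> (y - x) * ln (f 0)"
    by (simp add: distrib_left mult.assoc[symmetric])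
  moreover have "- x * (ln (f 0) + (- (ln (f x / f 0) / (- x)) * y)) = (y - x) * ln (f 0) - y * ln (f x)"
    using x fx f0 by (simp add: ln_div field_simps)
  ultimately have "- x * ln (f y) \<le> - x * (ln (f 0) + (- (ln (f x / f 0) / (- x)) * y))"
    by linarith
  then have "ln (f y) \<le> ln (f 0) + (- (ln (f x / f 0) / (- x)) * y)"
    using x by simp
  then show ?thesis
    using fy f0 by (metis exp_add exp_le_cancel_iff exp_ln)
qed

lemma nn_integral_first_moment_eq_tails:
  fixes f :: "real \<Rightarrow> real"
  assumes nn: "\<And>x. 0 \<le> f x" and [measurable]: "f \<in> borel_measurable borel"
  shows "(\<integral>\<^sup>+x. ennreal (f x * x * indicator {0..} x) \<partial>lborel)
       = (\<integral>\<^sup>+t. indicator {0..} t * (\<integral>\<^sup>+u. ennreal (f (t + u) * indicator {0..} u) \<partial>lborel) \<partial>lborel)"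
proof -
  have "(\<integral>\<^sup>+x. ennreal (f x * x * indicator {0..} x) \<partial>lborel)
      = (\<integral>\<^sup>+x. \<integral>\<^sup>+t. ennreal (f x * indicator {0..} x) * indicator {0..x} t \<partial>lborel \<partial>lborel)"
  proof (rule nn_integral_cong)
    fix x :: real
    show "ennreal (f x * x * indicator {0..} x)
        = (\<integral>\<^sup>+t. ennreal (f x * indicator {0..} x) * indicator {0..x} t \<partial>lborel)"
      using nn[of x] by (cases "0 \<le> x") (simp_all add: nn_integral_cmult_indicator ennreal_mult)
  qed
  also have "\<dots> = (\<integral>\<^sup>+t. \<integral>\<^sup>+x. ennreal (f x * indicator {0..} x) * indicator {0..x} t \<partial>lborel \<partial>lborel)"
    by (subst lborel_pair.Fubini')
       (auto simp: case_prod_unfold indicator_def cong: measurable_cong_sets)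
  also have "\<dots> = (\<integral>\<^sup>+t. indicator {0..} t * (\<integral>\<^sup>+u. ennreal (f (t + u) * indicator {0..} u) \<partial>lborel) \<partial>lborel)"
  proof (rule nn_integral_cong)
    fix t :: real
    show "(\<integral>\<^sup>+x. ennreal (f x * indicator {0..} x) * indicator {0..x} t \<partial>lborel)
        = indicator {0..} t * (\<integral>\<^sup>+u. ennreal (f (t + u) * indicator {0..} u) \<partial>lborel)"
    proof (cases "0 \<le> t")
      case True
      have "(\<integral>\<^sup>+x. ennreal (f x * indicator {0..} x) * indicator {0..x} t \<partial>lborel)
          = (\<integral>\<^sup>+x. ennreal (f x * indicator {t..} x) \<partial>distr lborel borel ((+) t))"
        using True by (auto simp: lborel_distr_plus indicator_def intro!: nn_integral_cong)
      also have "\<dots> = (\<integral>\<^sup>+u. ennreal (f (t + u) * indicator {0..} u) \<partial>lborel)"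
        by (subst nn_integral_distr) (auto intro!: nn_integral_cong simp: indicator_def)
      finally show ?thesis using True by simp
    qed (simp add: indicator_def)
  qed
  finally show ?thesis .
qed

lemma log_concave_first_moment_le:
  assumes lc: "log_concave f" and [measurable]: "f \<in> borel_measurable borel"
  shows "ennreal (f 0) * (\<integral>\<^sup>+x. ennreal (f x * x * indicator {0..} x) \<partial>lborel)
     \<le> (\<integral>\<^sup>+x. ennreal (f x * indicator {0..} x) \<partial>lborel) * (\<integral>\<^sup>+x. ennreal (f x * indicator {0..} x) \<partial>lborel)"
proof -
  note nn = log_concave_nonneg[OF lc]
  have "ennreal (f 0) * (\<integral>\<^sup>+x. ennreal (f x * x * indicator {0..} x) \<partial>lborel)
      = (\<integral>\<^sup>+t. ennreal (f 0) * (indicator {0..} t * (\<integral>\<^sup>+u. ennreal (f (t + u) * indicator {0..} u) \<partial>lborel)) \<partial>lborel)"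
    by (simp add: nn_integral_first_moment_eq_tails[OF nn] nn_integral_cmult)
  also have "\<dots> = (\<integral>\<^sup>+t. \<integral>\<^sup>+u. ennreal (f 0 * f (t + u) * indicator {0..} t * indicator {0..} u) \<partial>lborel \<partial>lborel)"
  proof (rule nn_integral_cong)
    fix t :: real
    show "ennreal (f 0) * (indicator {0..} t * (\<integral>\<^sup>+u. ennreal (f (t + u) * indicator {0..} u) \<partial>lborel))
        = (\<integral>\<^sup>+u. ennreal (f 0 * f (t + u) * indicator {0..} t * indicator {0..} u) \<partial>lborel)"
      using nn by (cases "0 \<le> t") (simp_all add: nn_integral_cmult[symmetric] ennreal_mult mult_ac)
  qed
  also have "\<dots> \<le> (\<integral>\<^sup>+t. \<integral>\<^sup>+u. ennreal (f t * indicator {0..} t) * ennreal (f u * indicator {0..} u) \<partial>lborel \<partial>lborel)"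
    using log_concave_mult_add_le[OF lc] nn
    by (intro nn_integral_mono) (auto simp: indicator_def ennreal_mult[symmetric] intro: ennreal_leI)
  also have "\<dots> = (\<integral>\<^sup>+x. ennreal (f x * indicator {0..} x) \<partial>lborel) * (\<integral>\<^sup>+x. ennreal (f x * indicator {0..} x) \<partial>lborel)"
    by (simp add: nn_integral_cmult nn_integral_multc)
  finally show ?thesis .
qed

lemma nn_integral_exp_atLeast0:
  assumes k: "0 < k" and C: "0 \<le> C"
  shows "(\<integral>\<^sup>+y. ennreal (C * exp (- k * y)) * indicator {0..} y \<partial>lborel) = ennreal (C / k)"
proof -
  have "(\<integral>\<^sup>+y. ennreal (C * exp (- k * y)) * indicator {0..} y \<partial>lborel) = 0 - (- (C / k) * exp (- k * 0))"
  proof (rule nn_integral_FTC_atLeast)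
    fix y :: real
    show "DERIV (\<lambda>y. - (C / k) * exp (- k * y)) y :> C * exp (- k * y)"
      using k by (auto intro!: derivative_eq_intros simp: field_simps)
    show "((\<lambda>y. - (C / k) * exp (- k * y)) \<longlongrightarrow> 0) at_top"
      using k by real_asymp
  qed (use C in auto)
  then show ?thesis by simp
qed

lemma log_concave_right_moment_integrable:
  assumes lc: "log_concave f" and fm[measurable]: "f \<in> borel_measurable borel" and f0: "0 < f 0"
    and fin: "(\<integral>\<^sup>+x. ennreal (f x) \<partial>lborel) < \<infinity>"
  shows "integrable lborel (\<lambda>x. f x * x * indicator {0..} x)"
proof (rule integrableI_nonneg)
  show "AE x in lborel. 0 \<le> f x * x * indicator {0..} x"
    using log_concave_nonneg[OF lc] by (auto simp: indicator_def)
  have "(\<integral>\<^sup>+x. ennreal (f x * indicator {0..} x) \<partial>lborel) \<le> (\<integral>\<^sup>+x. ennreal (f x) \<partial>lborel)"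
    by (intro nn_integral_mono) (auto simp: indicator_def)
  then have "(\<integral>\<^sup>+x. ennreal (f x * indicator {0..} x) \<partial>lborel) < \<infinity>"
    using fin by (rule le_less_trans)
  then have "(\<integral>\<^sup>+x. ennreal (f x * indicator {0..} x) \<partial>lborel) * (\<integral>\<^sup>+x. ennreal (f x * indicator {0..} x) \<partial>lborel) < \<infinity>"
    by (simp add: ennreal_mult_less_top)
  then have "ennreal (f 0) * (\<integral>\<^sup>+x. ennreal (f x * x * indicator {0..} x) \<partial>lborel) < \<infinity>"
    using log_concave_first_moment_le[OF lc fm] by (rule le_less_trans[rotated])
  then show "(\<integral>\<^sup>+x. ennreal (f x * x * indicator {0..} x) \<partial>lborel) < \<infinity>"
    using f0 by (force simp add: ennreal_mult_less_top)
qed simp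

lemma log_concave_left_exp_bound:
  assumes lc: "log_concave f" and f0: "0 < f 0"
    and p: "0 < p" and P: "(\<integral>\<^sup>+x. ennreal (f x * indicator {0..} x) \<partial>lborel) = ennreal p"
    and x: "x \<le> 0"
  shows "f x \<le> f 0 * exp (- (f 0 / p) * x)"
proof (rule ccontr)
  assume A: "\<not> ?thesis"
  define l where "l = f 0 / p"
  have l: "0 < l" using f0 p by (simp add: l_def)
  have x0: "x < 0" using A x by (cases "x = 0") auto
  have fx: "0 < f x" using A f0 by (smt (verit) exp_gt_zero mult_pos_pos)
  define k where "k = ln (f x / f 0) / (- x)"
  have "ln (f 0 * exp (- l * x)) < ln (f x)"
    using A f0 fx by (subst ln_less_cancel_iff) (auto simp: l_def)
  then have "l * (- x) < ln (f x / f 0)" using f0 fx by (simp add: ln_mult ln_div)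
  then have lk: "l < k" using x0 by (simp add: k_def field_simps)
  then have k: "0 < k" using l by simp
  have "ennreal p \<le> (\<integral>\<^sup>+y. ennreal (f 0 * exp (- k * y)) * indicator {0..} y \<partial>lborel)"
    unfolding P[symmetric] using log_concave_exp_decay[OF lc f0 x0 fx]
    by (intro nn_integral_mono) (auto simp: k_def indicator_def intro: ennreal_leI)
  also have "\<dots> = ennreal (f 0 / k)" using nn_integral_exp_atLeast0[OF k] f0 by simp
  finally have "p \<le> f 0 / k" using f0 k by (subst (asm) ennreal_le_iff) auto
  moreover have "f 0 / k < f 0 / l" using f0 l lk by (intro divide_strict_left_mono) auto
  ultimately show False using f0 by (simp add: l_def)
qed

lemma has_bochner_integral_exp_Icc:
  fixes l :: real
  assumes "a \<le> b" and "l \<noteq> 0"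
  shows "has_bochner_integral lborel (\<lambda>x. C * exp (- l * x) * indicator {a..b} x)
           (C * (exp (- l * a) - exp (- l * b)) / l)"
proof -
  have "has_bochner_integral lborel (\<lambda>x. C * exp (- l * x) * indicator {a..b} x)
          (- C / l * exp (- l * b) - - C / l * exp (- l * a))"
    using assms by (intro has_bochner_integral_FTC_Icc_real)
      (auto intro!: derivative_eq_intros continuous_intros simp: field_simps)
  then show ?thesis by (simp add: diff_divide_distrib right_diff_distrib)
qed

lemma has_bochner_integral_mult_exp_Icc:
  fixes l :: real
  assumes "a \<le> b" and "l \<noteq> 0"
  shows "has_bochner_integral lborel (\<lambda>x. - x * (C * exp (- l * x)) * indicator {a..b} x)
           (C * ((b / l + 1 / l\<^sup>2) * exp (- l * b) - (a / l + 1 / l\<^sup>2) * exp (- l * a)))"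
proof -
  have "has_bochner_integral lborel (\<lambda>x. - x * (C * exp (- l * x)) * indicator {a..b} x)
          (C * (b / l + 1 / l\<^sup>2) * exp (- l * b) - C * (a / l + 1 / l\<^sup>2) * exp (- l * a))"
    using assms by (intro has_bochner_integral_FTC_Icc_real)
      (auto intro!: derivative_eq_intros continuous_intros simp: field_simps power2_eq_square)
  then show ?thesis by (simp add: algebra_simps)
qed

(* Among masses lying below g on [a, 0], filling g from 0 outwards minimises the first moment;
   the integrand below is the pointwise certificate of this. *)
lemma bathtub_moment_lower_bound:
  fixes f g :: "real \<Rightarrow> real"
  assumes a: "a \<le> 0" and nn: "\<And>x. 0 \<le> f x" and f_le_g: "\<And>x. a \<le> x \<Longrightarrow> x \<le> 0 \<Longrightarrow> f x \<le> g x"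
    and int_f: "integrable lborel (\<lambda>x. f x * indicator {..0} x)"
    and int_g: "integrable lborel (\<lambda>x. g x * indicator {a..0} x)"
    and int_xg: "integrable lborel (\<lambda>x. - x * g x * indicator {a..0} x)"
    and int_xf: "integrable lborel (\<lambda>x. f x * (- x) * indicator {..0} x)"
  shows "(\<integral>x. - x * g x * indicator {a..0} x \<partial>lborel)
           - a * ((\<integral>x. f x * indicator {..0} x \<partial>lborel) - (\<integral>x. g x * indicator {a..0} x \<partial>lborel))
         \<le> (\<integral>x. f x * (- x) * indicator {..0} x \<partial>lborel)"
proof -
  have "(\<integral>x. - x * g x * indicator {a..0} x - a * (f x * indicator {..0} x - g x * indicator {a..0} x) \<partial>lborel)
      \<le> (\<integral>x. f x * (- x) * indicator {..0} x \<partial>lborel)"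
  proof (rule integral_mono)
    fix x :: real
    consider "0 < x" | "a \<le> x" "x \<le> 0" | "x < a" by linarith
    then show "- x * g x * indicator {a..0} x - a * (f x * indicator {..0} x - g x * indicator {a..0} x)
        \<le> f x * (- x) * indicator {..0} x"
    proof cases
      case 2
      then have "(x - a) * (f x - g x) \<le> 0" using f_le_g by (intro mult_nonneg_nonpos) auto
      then show ?thesis using 2 by (simp add: algebra_simps)
    next
      case 3
      then have "(x - a) * f x \<le> 0" using nn by (intro mult_nonpos_nonneg) auto
      then show ?thesis using 3 a by (simp add: algebra_simps)
    qed simp
  qed (use int_f int_g int_xg int_xf in auto)
  then show ?thesis
    using int_f int_g int_xg by (simp add: integral_diff)
qed

lemma log_concave_left_moment_ge:
  assumes lc: "log_concave f" and f0: "0 < f 0"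
    and p: "0 < p" "p \<le> 1" and P: "(\<integral>\<^sup>+x. ennreal (f x * indicator {0..} x) \<partial>lborel) = ennreal p"
    and int_left: "integrable lborel (\<lambda>x. f x * indicator {..0} x)"
    and left: "1 - p \<le> (\<integral>x. f x * indicator {..0} x \<partial>lborel)"
    and int_moment: "integrable lborel (\<lambda>x. f x * (- x) * indicator {..0} x)"
  shows "p * (p - 1 - ln p) / f 0 \<le> (\<integral>x. f x * (- x) * indicator {..0} x \<partial>lborel)"
proof -
  define l where "l = f 0 / p"
  have l: "0 < l" using f0 p by (simp add: l_def)
  \<comment> \<open>\<open>a\<close> is chosen so that the exponential cap carries mass exactly \<open>1 - p\<close> on \<open>[a, 0]\<close>.\<close>
  define a where "a = ln p / l"
  have a: "a \<le> 0" using p l by (simp add: a_def divide_nonpos_pos)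
  have exp_a: "exp (- l * a) = 1 / p" using l p by (simp add: a_def exp_minus inverse_eq_divide)
  have "f 0 * (exp (- l * a) - exp (- l * 0)) / l = 1 - p"
    unfolding exp_a using f0 p by (simp add: l_def field_simps)
  then have mass: "has_bochner_integral lborel (\<lambda>x. f 0 * exp (- l * x) * indicator {a..0} x) (1 - p)"
    using has_bochner_integral_exp_Icc[OF a, of l "f 0"] l by simp
  have "f 0 * ((0 / l + 1 / l\<^sup>2) * exp (- l * 0) - (a / l + 1 / l\<^sup>2) * exp (- l * a))
      = p * (p - 1 - ln p) / f 0"
    unfolding exp_a using f0 p by (simp add: a_def l_def field_simps power2_eq_square)
  then have moment: "has_bochner_integral lborel (\<lambda>x. - x * (f 0 * exp (- l * x)) * indicator {a..0} x)
      (p * (p - 1 - ln p) / f 0)"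
    using has_bochner_integral_mult_exp_Icc[OF a, of l "f 0"] l by simp
  have "p * (p - 1 - ln p) / f 0 - a * ((\<integral>x. f x * indicator {..0} x \<partial>lborel) - (1 - p))
      \<le> (\<integral>x. f x * (- x) * indicator {..0} x \<partial>lborel)"
    using bathtub_moment_lower_bound[OF a log_concave_nonneg[OF lc] _ int_left
        integrable.intros[OF mass] integrable.intros[OF moment] int_moment]
      log_concave_left_exp_bound[OF lc f0 p(1) P]
      has_bochner_integral_integral_eq[OF mass] has_bochner_integral_integral_eq[OF moment]
    by (simp add: l_def)
  moreover have "0 \<le> - a * ((\<integral>x. f x * indicator {..0} x \<partial>lborel) - (1 - p))"
    using a left by (intro mult_nonneg_nonneg) auto
  ultimately show ?thesis by linarith
qed

lemma conditional_mean_le_of_moment_bounds: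
  fixes c p A N :: real
  assumes c: "0 < c" and p: "0 < p" and A: "0 \<le> A" and cA: "c * A \<le> p * p"
    and N: "p * (p - 1 - ln p) / c \<le> N"
  shows "A / p \<le> (1 / ln 2) * (A + N)"
proof -
  have L: "0 \<le> p - 1 - ln p" using ln_le_minus_one[OF p] by simp
  have "(p - 1 - ln p) * (A / p) \<le> (p - 1 - ln p) * (p / c)"
    using c p cA L by (intro mult_left_mono) (auto simp: field_simps)
  also have "\<dots> = p * (p - 1 - ln p) / c" by simp
  finally have N': "(p - 1 - ln p) * (A / p) \<le> N" using N by linarith
  have "ln 2 \<le> 2 * p - 1 - ln p"
    using ln_le_minus_one[of "2 * p"] p by (simp add: ln_mult)
  then have "ln 2 * (A / p) \<le> (2 * p - 1 - ln p) * (A / p)"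
    using A p by (intro mult_right_mono) auto
  also have "\<dots> = A + (p - 1 - ln p) * (A / p)" using p by (simp add: field_simps)
  finally have "ln 2 * (A / p) \<le> A + N" using N' by linarith
  then show ?thesis by (simp add: field_simps)
qed

lemma integral_mult_abs_split:
  fixes f :: "real \<Rightarrow> real"
  assumes int: "integrable lborel (\<lambda>x. f x * \<bar>x\<bar>)"
  shows "integrable lborel (\<lambda>x. f x * x * indicator {0..} x)"
    and "integrable lborel (\<lambda>x. f x * (- x) * indicator {..0} x)"
    and "(\<integral>x. f x * \<bar>x\<bar> \<partial>lborel)
       = (\<integral>x. f x * x * indicator {0..} x \<partial>lborel) + (\<integral>x. f x * (- x) * indicator {..0} x \<partial>lborel)"
proof -
  have "integrable lborel (\<lambda>x. f x * \<bar>x\<bar> * indicator {0..} x)"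
    and "integrable lborel (\<lambda>x. f x * \<bar>x\<bar> * indicator {..0} x)"
    using int by (auto intro: integrable_real_mult_indicator)
  moreover have "(\<lambda>x. f x * \<bar>x\<bar> * indicator {0..} x) = (\<lambda>x. f x * x * indicator {0..} x)"
    and "(\<lambda>x. f x * \<bar>x\<bar> * indicator {..0} x) = (\<lambda>x. f x * (- x) * indicator {..0} x)"
    by (auto simp: indicator_def fun_eq_iff)
  ultimately show right: "integrable lborel (\<lambda>x. f x * x * indicator {0..} x)"
    and left: "integrable lborel (\<lambda>x. f x * (- x) * indicator {..0} x)"
    by simp_all
  have "(\<integral>x. f x * \<bar>x\<bar> \<partial>lborel)
      = (\<integral>x. f x * x * indicator {0..} x + f x * (- x) * indicator {..0} x \<partial>lborel)"
    by (intro Bochner_Integration.integral_cong) (auto simp: indicator_def)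
  then show "(\<integral>x. f x * \<bar>x\<bar> \<partial>lborel)
      = (\<integral>x. f x * x * indicator {0..} x \<partial>lborel) + (\<integral>x. f x * (- x) * indicator {..0} x \<partial>lborel)"
    using right left by simp
qed

lemma probability_density_half_masses:
  fixes f :: "real \<Rightarrow> real"
  assumes nn: "\<And>x. 0 \<le> f x" and fm[measurable]: "f \<in> borel_measurable borel"
    and one: "(\<integral>\<^sup>+x. ennreal (f x) \<partial>lborel) = 1"
  shows "(\<integral>x. f x * indicator {0..} x \<partial>lborel) \<le> 1"
    and "1 - (\<integral>x. f x * indicator {0..} x \<partial>lborel) \<le> (\<integral>x. f x * indicator {..0} x \<partial>lborel)"
proof -
  have intf: "integrable lborel f"
    using one nn by (intro integrableI_nonneg) auto
  have int_right: "integrable lborel (\<lambda>x. f x * indicator {0..} x)"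
    and int_left: "integrable lborel (\<lambda>x. f x * indicator {..0} x)"
    using intf by (auto intro: integrable_real_mult_indicator)
  have f1: "(\<integral>x. f x \<partial>lborel) = 1"
    using nn_integral_eq_integral[OF intf] one nn by simp
  show "(\<integral>x. f x * indicator {0..} x \<partial>lborel) \<le> 1"
    unfolding f1[symmetric] using nn
    by (intro integral_mono int_right intf) (auto simp: indicator_def)
  have "(\<integral>x. f x \<partial>lborel) \<le> (\<integral>x. f x * indicator {0..} x + f x * indicator {..0} x \<partial>lborel)"
    using nn by (intro integral_mono intf Bochner_Integration.integrable_add int_right int_left)
      (auto simp: indicator_def)
  then show "1 - (\<integral>x. f x * indicator {0..} x \<partial>lborel) \<le> (\<integral>x. f x * indicator {..0} x \<partial>lborel)"
    unfolding f1 using int_right int_left by simp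
qed

lemma log_concave_density_conditional_mean_le:
  assumes lc: "log_concave f" and fm[measurable]: "f \<in> borel_measurable borel" and f0: "0 < f 0"
    and one: "(\<integral>\<^sup>+x. ennreal (f x) \<partial>lborel) = 1"
    and int: "integrable lborel (\<lambda>x. f x * \<bar>x\<bar>)"
    and right: "0 < (\<integral>x. f x * indicator {0..} x \<partial>lborel)"
  shows "(\<integral>x. f x * (\<bar>x\<bar> * indicator {0..} x) \<partial>lborel) / (\<integral>x. f x * indicator {0..} x \<partial>lborel)
     \<le> (1 / ln 2) * (\<integral>x. f x * \<bar>x\<bar> \<partial>lborel)"
proof -
  note nn = log_concave_nonneg[OF lc]
  define p where "p = (\<integral>x. f x * indicator {0..} x \<partial>lborel)"
  define A where "A = (\<integral>x. f x * x * indicator {0..} x \<partial>lborel)"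
  define N where "N = (\<integral>x. f x * (- x) * indicator {..0} x \<partial>lborel)"
  note int_A = integral_mult_abs_split(1)[OF int] and int_N = integral_mult_abs_split(2)[OF int]
  have int_left: "integrable lborel (\<lambda>x. f x * indicator {..0} x)"
    and int_right: "integrable lborel (\<lambda>x. f x * indicator {0..} x)"
    using one nn by (auto intro!: integrable_real_mult_indicator integrableI_nonneg)
  have ennreal_p: "(\<integral>\<^sup>+x. ennreal (f x * indicator {0..} x) \<partial>lborel) = ennreal p"
    unfolding p_def using nn by (intro nn_integral_eq_integral int_right) (auto simp: indicator_def)
  have ennreal_A: "(\<integral>\<^sup>+x. ennreal (f x * x * indicator {0..} x) \<partial>lborel) = ennreal A"
    unfolding A_def using nn by (intro nn_integral_eq_integral int_A) (auto simp: indicator_def)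
  have A0: "0 \<le> A" unfolding A_def using nn by (intro integral_nonneg_AE) (auto simp: indicator_def)
  have "ennreal (f 0 * A) \<le> ennreal (p * p)"
    using log_concave_first_moment_le[OF lc fm] f0 A0 right
    unfolding ennreal_p ennreal_A by (simp add: ennreal_mult p_def)
  then have "f 0 * A \<le> p * p" using right by (simp add: ennreal_le_iff p_def)
  moreover have "p * (p - 1 - ln p) / f 0 \<le> N"
    using probability_density_half_masses[OF nn fm one] right unfolding N_def p_def
    by (intro log_concave_left_moment_ge[OF lc f0 _ _ ennreal_p[unfolded p_def] int_left _ int_N]) auto
  ultimately have "A / p \<le> (1 / ln 2) * (A + N)"
    using conditional_mean_le_of_moment_bounds[OF f0 _ A0] right unfolding p_def by blast
  moreover have "(\<integral>x. f x * (\<bar>x\<bar> * indicator {0..} x) \<partial>lborel) = A"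
    unfolding A_def by (intro Bochner_Integration.integral_cong) (auto simp: indicator_def)
  moreover have "(\<integral>x. f x * \<bar>x\<bar> \<partial>lborel) = A + N"
    using integral_mult_abs_split(3)[OF int] unfolding A_def N_def .
  ultimately show ?thesis unfolding p_def by simp
qed

lemma distributed_integral_indicator:
  assumes D: "distributed M lborel X (\<lambda>x. ennreal (f x))" and nn: "\<And>x. 0 \<le> f x"
    and [measurable]: "S \<in> sets borel" "h \<in> borel_measurable borel"
  shows "(\<integral>\<omega>. h (X \<omega>) * indicator {\<omega> \<in> space M. X \<omega> \<in> S} \<omega> \<partial>M) = (\<integral>x. f x * (h x * indicator S x) \<partial>lborel)"
proof -
  have "(\<integral>\<omega>. h (X \<omega>) * indicator {\<omega> \<in> space M. X \<omega> \<in> S} \<omega> \<partial>M) = (\<integral>\<omega>. h (X \<omega>) * indicator S (X \<omega>) \<partial>M)"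
    by (intro Bochner_Integration.integral_cong) (auto simp: indicator_def)
  also have "\<dots> = (\<integral>x. f x * (h x * indicator S x) \<partial>lborel)"
    by (rule distributed_integral[OF D, symmetric]) (auto simp: nn)
  finally show ?thesis .
qed

lemma (in prob_space) distributed_density_nn_integral_eq_1:
  assumes "distributed M lborel X (\<lambda>x. ennreal (f x))"
  shows "(\<integral>\<^sup>+x. ennreal (f x) \<partial>lborel) = 1"
  using distributed_emeasure[OF assms, of UNIV] by (simp add: emeasure_space_1)

lemma (in prob_space) distributed_uminus:
  fixes X :: "'a \<Rightarrow> real"
  assumes "distributed M lborel X (\<lambda>x. ennreal (f x))"
  shows "distributed M lborel (\<lambda>\<omega>. - X \<omega>) (\<lambda>x. ennreal (f (- x)))"
  using distributed_affine[OF assms, of "-1" 0] by (simp add: divide_ennreal_def)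

lemma (in prob_space) log_concave_density_pos_zero:
  assumes lc: "log_concave f" and D: "distributed M lborel X (\<lambda>x. ennreal (f x))"
    and "0 < measure M {\<omega> \<in> space M. X \<omega> \<ge> 0}" and "0 < measure M {\<omega> \<in> space M. X \<omega> \<le> 0}"
  shows "0 < f 0"
proof -
  note nn = log_concave_nonneg[OF lc]
  have pos: "\<exists>x\<in>S. 0 < f x" if [measurable]: "S \<in> sets borel"
    and "0 < measure M {\<omega> \<in> space M. X \<omega> \<in> S}" for S
  proof (rule ccontr)
    assume "\<not> ?thesis"
    then have "f x = 0" if "x \<in> S" for x
      using nn[of x] that by fastforce
    then have "(\<lambda>x. f x * (1 * indicator S x)) = (\<lambda>x. 0)"
      by (auto simp: indicator_def fun_eq_iff)
    then show False
      using that distributed_integral_indicator[OF D nn that(1), of "\<lambda>_. 1"]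
      by (simp add: Int_absorb2 Collect_subset)
  qed
  obtain x y where "y \<le> 0" "0 < f y" "0 \<le> x" "0 < f x"
    using pos[of "{0..}"] pos[of "{..0}"] assms by auto
  then show ?thesis by (intro log_concave_pos_between[OF lc \<open>y \<le> 0\<close> \<open>0 \<le> x\<close>])
qed

lemma (in prob_space) log_concave_integrable_abs:
  assumes lc: "log_concave f" and D: "distributed M lborel X (\<lambda>x. ennreal (f x))" and f0: "0 < f 0"
  shows "integrable M (\<lambda>\<omega>. \<bar>X \<omega>\<bar>)"
proof -
  note nn = log_concave_nonneg[OF lc]
  have fm[measurable]: "f \<in> borel_measurable borel"
    using distributed_real_measurable[OF _ D] nn by simp
  have "integrable lborel (\<lambda>x. f x * x * indicator {0..} x)"
    using distributed_density_nn_integral_eq_1[OF D] f0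
    by (intro log_concave_right_moment_integrable[OF lc fm]) auto
  moreover have "integrable lborel (\<lambda>x. f (- x) * x * indicator {0..} x)"
    using distributed_density_nn_integral_eq_1[OF distributed_uminus[OF D]] f0
    by (intro log_concave_right_moment_integrable[OF log_concave_reflect[OF lc]]) auto
  then have "integrable lborel (\<lambda>x. f x * (- x) * indicator {..0} x)"
    using lborel_integrable_real_affine_iff[of "-1" "\<lambda>x. f x * (- x) * indicator {..0} x" 0]
    by (simp add: indicator_def)
  ultimately have "integrable lborel (\<lambda>x. f x * x * indicator {0..} x + f x * (- x) * indicator {..0} x)"
    by (rule Bochner_Integration.integrable_add)
  also have "(\<lambda>x. f x * x * indicator {0..} x + f x * (- x) * indicator {..0} x) = (\<lambda>x. f x * \<bar>x\<bar>)"
    by (auto simp: indicator_def fun_eq_iff)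
  finally show ?thesis
    using distributed_integrable[OF D, of abs] nn by simp
qed

lemma (in prob_space) log_concave_conditional_mean_le:
  assumes lc: "log_concave f" and D: "distributed M lborel X (\<lambda>x. ennreal (f x))" and f0: "0 < f 0"
    and int: "integrable M (\<lambda>\<omega>. \<bar>X \<omega>\<bar>)"
    and pos: "0 < measure M {\<omega> \<in> space M. X \<omega> \<ge> 0}"
  shows "(\<integral>\<omega>. \<bar>X \<omega>\<bar> * indicator {\<omega> \<in> space M. X \<omega> \<ge> 0} \<omega> \<partial>M) / measure M {\<omega> \<in> space M. X \<omega> \<ge> 0}
    \<le> (1 / ln 2) * (\<integral>\<omega>. \<bar>X \<omega>\<bar> \<partial>M)"
proof -
  note nn = log_concave_nonneg[OF lc]
  have fm[measurable]: "f \<in> borel_measurable borel"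
    using distributed_real_measurable[OF _ D] nn by simp
  have "measure M {\<omega> \<in> space M. X \<omega> \<ge> 0} = (\<integral>x. f x * indicator {0..} x \<partial>lborel)"
    using distributed_integral_indicator[OF D nn, of "{0..}" "\<lambda>_. 1"]
    by (simp add: Int_absorb2 Collect_subset)
  moreover have "(\<integral>\<omega>. \<bar>X \<omega>\<bar> * indicator {\<omega> \<in> space M. X \<omega> \<ge> 0} \<omega> \<partial>M)
      = (\<integral>x. f x * (\<bar>x\<bar> * indicator {0..} x) \<partial>lborel)"
    using distributed_integral_indicator[OF D nn, of "{0..}" abs] by simp
  moreover have "(\<integral>\<omega>. \<bar>X \<omega>\<bar> \<partial>M) = (\<integral>x. f x * \<bar>x\<bar> \<partial>lborel)"
    using distributed_integral[OF D, of abs] nn by simp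
  moreover have "integrable lborel (\<lambda>x. f x * \<bar>x\<bar>)"
    using distributed_integrable[OF D, of abs] int nn by simp
  ultimately show ?thesis
    using log_concave_density_conditional_mean_le[OF lc fm f0 distributed_density_nn_integral_eq_1[OF D]] pos
    by simp
qed

theorem lemma25:
  fixes M :: "'a measure" and X :: "'a \<Rightarrow> real" and f :: "real \<Rightarrow> real"
  assumes "prob_space M"
    and "log_concave f"
    and "distributed M lborel X (\<lambda>x. ennreal (f x))"
    and "measure M {\<omega> \<in> space M. X \<omega> \<ge> 0} > 0"
    and "measure M {\<omega> \<in> space M. X \<omega> \<le> 0} > 0"
  shows "max ((\<integral>\<omega>. \<bar>X \<omega>\<bar> * indicator {\<omega> \<in> space M. X \<omega> \<le> 0} \<omega> \<partial>M)
                / measure M {\<omega> \<in> space M. X \<omega> \<le> 0})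
             ((\<integral>\<omega>. \<bar>X \<omega>\<bar> * indicator {\<omega> \<in> space M. X \<omega> \<ge> 0} \<omega> \<partial>M)
                / measure M {\<omega> \<in> space M. X \<omega> \<ge> 0})
         \<le> (1 / ln 2) * (\<integral>\<omega>. \<bar>X \<omega>\<bar> \<partial>M)"
proof -
  interpret prob_space M by fact
  note lc = assms(2) and D = assms(3)
  have f0: "0 < f 0" using log_concave_density_pos_zero[OF lc D assms(4,5)] .
  have int: "integrable M (\<lambda>\<omega>. \<bar>X \<omega>\<bar>)" using log_concave_integrable_abs[OF lc D f0] .
  have "(\<integral>\<omega>. \<bar>X \<omega>\<bar> * indicator {\<omega> \<in> space M. X \<omega> \<le> 0} \<omega> \<partial>M) / measure M {\<omega> \<in> space M. X \<omega> \<le> 0}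
      \<le> (1 / ln 2) * (\<integral>\<omega>. \<bar>X \<omega>\<bar> \<partial>M)"
    using log_concave_conditional_mean_le[OF log_concave_reflect[OF lc] distributed_uminus[OF D]]
      f0 int assms(5) by simp
  moreover have "(\<integral>\<omega>. \<bar>X \<omega>\<bar> * indicator {\<omega> \<in> space M. X \<omega> \<ge> 0} \<omega> \<partial>M) / measure M {\<omega> \<in> space M. X \<omega> \<ge> 0}
      \<le> (1 / ln 2) * (\<integral>\<omega>. \<bar>X \<omega>\<bar> \<partial>M)"
    using log_concave_conditional_mean_le[OF lc D f0 int assms(4)] .
  ultimately show ?thesis by simp
qed

end
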